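(* Let $\mathcal{V}$ be a finite set of nodes, $\mathcal{F}$ a finite set of flows, each flow $f$ with rate $\lambda_f>0$ and path node set $\mathcal{V}_f\subseteq\mathcal{V}$, and each node $v$ with capacity $c_v>0$. For $\mathcal{U}\subseteq\mathcal{V}$ let $R_3(\mathcal{U})$ be the optimal value of $$\max \sum_{f\in\mathcal{F}}\sum_{v\in\mathcal{V}_f\cap\mathcal{U}}\lambda_f^v$$ over nonnegative $(\lambda_f^v)_{f\in\mathcal{F},v\in\mathcal{V}}$ subject to $\sum_{f\in\mathcal{F}}\lambda_f^v\le c_v$ for all $v\in\mathcal{U}$, $\lambda_f^v=0$ for all $f$ and all $v\notin\mathcal{U}$, and $\sum_{v\in\mathcal{U}}\lambda_f^v\le\lambda_f$ for all $f\in\mathcal{F}$. Then the set function $R_3:2^{\mathcal{V}}\to\mathbb{R}$ is monotonically nondecreasing and submodular.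
   Context: A set function $H:2^{\mathcal{V}}\to\mathbb{R}$ is submodular if $H(\mathcal{V}_1\cup\{v\})-H(\mathcal{V}_1)\ge H(\mathcal{V}_2\cup\{v\})-H(\mathcal{V}_2)$ for all $\mathcal{V}_1\subseteq\mathcal{V}_2\subseteq\mathcal{V}$ and $v\in\mathcal{V}\setminus\mathcal{V}_2$. *)

theory Defs
  imports Complex_Main
begin

definition feasible3 ::
  "'v set \<Rightarrow> 'f set \<Rightarrow> ('f \<Rightarrow> real) \<Rightarrow> ('v \<Rightarrow> real) \<Rightarrow> 'v set \<Rightarrow> ('f \<Rightarrow> 'v \<Rightarrow> real) \<Rightarrow> bool"
  where "feasible3 V F rate cap U x \<longleftrightarrow>
     (\<forall>f\<in>F. \<forall>v\<in>V. 0 \<le> x f v) \<and>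
     (\<forall>v\<in>U. (\<Sum>f\<in>F. x f v) \<le> cap v) \<and>
     (\<forall>f\<in>F. \<forall>v\<in>V - U. x f v = 0) \<and>
     (\<forall>f\<in>F. (\<Sum>v\<in>U. x f v) \<le> rate f)"

definition objective3 :: "'f set \<Rightarrow> ('f \<Rightarrow> 'v set) \<Rightarrow> 'v set \<Rightarrow> ('f \<Rightarrow> 'v \<Rightarrow> real) \<Rightarrow> real"
  where "objective3 F path U x = (\<Sum>f\<in>F. \<Sum>v\<in>path f \<inter> U. x f v)"

definition R3 ::
  "'v set \<Rightarrow> 'f set \<Rightarrow> ('f \<Rightarrow> real) \<Rightarrow> ('f \<Rightarrow> 'v set) \<Rightarrow> ('v \<Rightarrow> real) \<Rightarrow> 'v set \<Rightarrow> real"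
  where "R3 V F rate path cap U =
     Sup {objective3 F path U x | x. feasible3 V F rate cap U x}"

definition submodular_on :: "'a set \<Rightarrow> ('a set \<Rightarrow> real) \<Rightarrow> bool"
  where "submodular_on V H \<longleftrightarrow>
     (\<forall>V1 V2 v. V1 \<subseteq> V2 \<and> V2 \<subseteq> V \<and> v \<in> V - V2 \<longrightarrow>
        H (V1 \<union> {v}) - H V1 \<ge> H (V2 \<union> {v}) - H V2)"

definition monotone_nondecr_on :: "'a set \<Rightarrow> ('a set \<Rightarrow> real) \<Rightarrow> bool"
  where "monotone_nondecr_on V H \<longleftrightarrow> (\<forall>A B. A \<subseteq> B \<and> B \<subseteq> V \<longrightarrow> H A \<le> H B)"

end

theory Submission
  imports Defs "HOL-Analysis.Analysis"
begin

text \<open>The LP is a bipartite flow problem: flow f ships at most rate f to the nodes of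
  path f \<inter> U, and node v absorbs at most cap v. By max-flow/min-cut its optimum R_3(U) is
  the minimum over Y \<subseteq> U of the cut value g(U, Y) = (total rate of the flows meeting Y) +
  cap(U - Y). The cut value is increasing in U and satisfies the lattice inequality
  g(A \<union> B, Y1 \<union> Y2) + g(A \<inter> B, Y1 \<inter> Y2) \<le> g(A, Y1) + g(B, Y2), because the rate term
  is a coverage function and the capacity term is modular; minimising over Y preserves
  both properties.

  Min-cut attainment is shown by augmenting paths: a maximal allocation exists by
  compactness, and for it the set Y of nodes not reachable in the residual graph from a
  flow with spare rate is a cut whose value equals the allocated total.\<close>

subsection \<open>Minimising over the subsets of a set\<close>

lemma monotone_nondecr_on_partial_min:
  fixes H :: "'a set \<Rightarrow> real" and g :: "'a set \<Rightarrow> 'a set \<Rightarrow> real"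
  assumes "finite V"
    and H: "\<And>A. A \<subseteq> V \<Longrightarrow> H A = (MIN Y\<in>Pow A. g A Y)"
    and g_mono: "\<And>A B Y. A \<subseteq> B \<Longrightarrow> B \<subseteq> V \<Longrightarrow> Y \<subseteq> B \<Longrightarrow> g A (Y \<inter> A) \<le> g B Y"
  shows "monotone_nondecr_on V H"
  unfolding monotone_nondecr_on_def
proof (intro allI impI)
  fix A B assume "A \<subseteq> B \<and> B \<subseteq> V"
  then have AB: "A \<subseteq> B" "B \<subseteq> V" by auto
  then have fin: "finite A" "finite B"
    using finite_subset[OF _ \<open>finite V\<close>] by auto
  have "Min (g B ` Pow B) \<in> g B ` Pow B"
    using fin by (intro Min_in) auto
  then obtain Y where "Y \<subseteq> B" and HB: "H B = g B Y"
    unfolding H[OF AB(2)] by blast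
  have "H A \<le> g A (Y \<inter> A)"
    unfolding H[OF subset_trans[OF AB]] by (rule Min_le) (use fin in auto)
  also have "\<dots> \<le> g B Y" by (rule g_mono[OF AB \<open>Y \<subseteq> B\<close>])
  finally show "H A \<le> H B" using HB by simp
qed

lemma submodular_on_partial_min:
  fixes H :: "'a set \<Rightarrow> real" and g :: "'a set \<Rightarrow> 'a set \<Rightarrow> real"
  assumes "finite V"
    and H: "\<And>A. A \<subseteq> V \<Longrightarrow> H A = (MIN Y\<in>Pow A. g A Y)"
    and g_lattice: "\<And>A B Y1 Y2. A \<subseteq> V \<Longrightarrow> B \<subseteq> V \<Longrightarrow> Y1 \<subseteq> A \<Longrightarrow> Y2 \<subseteq> B \<Longrightarrow>
      g (A \<union> B) (Y1 \<union> Y2) + g (A \<inter> B) (Y1 \<inter> Y2) \<le> g A Y1 + g B Y2"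
  shows "submodular_on V H"
proof -
  have H_le: "H A \<le> g A Y" if "A \<subseteq> V" "Y \<subseteq> A" for A Y
    unfolding H[OF that(1)] by (rule Min_le) (use that finite_subset[OF that(1) \<open>finite V\<close>] in auto)
  have H_attained: "\<exists>Y\<subseteq>A. H A = g A Y" if "A \<subseteq> V" for A
  proof -
    have "Min (g A ` Pow A) \<in> g A ` Pow A"
      using finite_subset[OF that \<open>finite V\<close>] by (intro Min_in) auto
    then show ?thesis unfolding H[OF that] by blast
  qed
  have lattice: "H (A \<union> B) + H (A \<inter> B) \<le> H A + H B" if AV: "A \<subseteq> V" and BV: "B \<subseteq> V" for A B
  proof -
    obtain Y1 where Y1: "Y1 \<subseteq> A" "H A = g A Y1" using H_attained[OF AV] by blast
    obtain Y2 where Y2: "Y2 \<subseteq> B" "H B = g B Y2" using H_attained[OF BV] by blast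
    have "H (A \<union> B) \<le> g (A \<union> B) (Y1 \<union> Y2)"
      using AV BV Y1(1) Y2(1) by (intro H_le) auto
    moreover have "H (A \<inter> B) \<le> g (A \<inter> B) (Y1 \<inter> Y2)"
      using AV Y1(1) Y2(1) by (intro H_le) auto
    ultimately show ?thesis
      using g_lattice[OF AV BV Y1(1) Y2(1)] Y1(2) Y2(2) by linarith
  qed
  then show ?thesis
    unfolding submodular_on_def
  proof (intro allI impI)
    fix V1 V2 v assume "V1 \<subseteq> V2 \<and> V2 \<subseteq> V \<and> v \<in> V - V2"
    then have "V1 \<union> {v} \<subseteq> V" "V2 \<subseteq> V" "V1 \<union> {v} \<union> V2 = V2 \<union> {v}" "(V1 \<union> {v}) \<inter> V2 = V1"
      by auto
    then show "H (V1 \<union> {v}) - H V1 \<ge> H (V2 \<union> {v}) - H V2"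
      using lattice[of "V1 \<union> {v}" V2] by simp
  qed
qed

definition touched_rate :: "'f set \<Rightarrow> ('f \<Rightarrow> real) \<Rightarrow> ('f \<Rightarrow> 'v set) \<Rightarrow> 'v set \<Rightarrow> real"
  where "touched_rate F rate paths Y = (\<Sum>f\<in>F. if paths f \<inter> Y = {} then 0 else rate f)"

definition cut_value ::
  "'f set \<Rightarrow> ('f \<Rightarrow> real) \<Rightarrow> ('f \<Rightarrow> 'v set) \<Rightarrow> ('v \<Rightarrow> real) \<Rightarrow> 'v set \<Rightarrow> 'v set \<Rightarrow> real"
  where "cut_value F rate paths cap U Y = touched_rate F rate paths Y + sum cap (U - Y)"

lemma touched_rate_mono:
  assumes "\<And>f. f \<in> F \<Longrightarrow> 0 \<le> rate f" and "Y1 \<subseteq> Y2"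
  shows "touched_rate F rate paths Y1 \<le> touched_rate F rate paths Y2"
  unfolding touched_rate_def by (rule sum_mono) (use assms in auto)

lemma touched_rate_submodular:
  assumes "\<And>f. f \<in> F \<Longrightarrow> 0 \<le> rate f"
  shows "touched_rate F rate paths (Y1 \<union> Y2) + touched_rate F rate paths (Y1 \<inter> Y2)
    \<le> touched_rate F rate paths Y1 + touched_rate F rate paths Y2"
  unfolding touched_rate_def sum.distrib[symmetric] by (rule sum_mono) (use assms in auto)

lemma cut_value_mono:
  assumes "finite V" "A \<subseteq> B" "B \<subseteq> V" "Y \<subseteq> B"
    and "\<And>f. f \<in> F \<Longrightarrow> 0 \<le> rate f" and "\<And>v. v \<in> V \<Longrightarrow> 0 \<le> cap v"
  shows "cut_value F rate paths cap A (Y \<inter> A) \<le> cut_value F rate paths cap B Y"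
proof -
  have "touched_rate F rate paths (Y \<inter> A) \<le> touched_rate F rate paths Y"
    using assms by (intro touched_rate_mono) auto
  moreover have "sum cap (A - Y \<inter> A) \<le> sum cap (B - Y)"
    using assms finite_subset[of B V] by (intro sum_mono2) auto
  ultimately show ?thesis unfolding cut_value_def by simp
qed

lemma cut_value_lattice:
  assumes "finite V" "A \<subseteq> V" "B \<subseteq> V" "Y1 \<subseteq> A" "Y2 \<subseteq> B"
    and "\<And>f. f \<in> F \<Longrightarrow> 0 \<le> rate f" and "\<And>v. v \<in> V \<Longrightarrow> 0 \<le> cap v"
  shows "cut_value F rate paths cap (A \<union> B) (Y1 \<union> Y2) + cut_value F rate paths cap (A \<inter> B) (Y1 \<inter> Y2)
    \<le> cut_value F rate paths cap A Y1 + cut_value F rate paths cap B Y2"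
proof -
  have as_sum_over_V: "sum cap S = (\<Sum>w\<in>V. if w \<in> S then cap w else 0)" if "S \<subseteq> V" for S
    using sum.inter_restrict[OF \<open>finite V\<close>, of cap S] that by (simp add: Int_absorb1)
  have "(\<Sum>w\<in>V. (if w \<in> A \<union> B - (Y1 \<union> Y2) then cap w else 0) + (if w \<in> A \<inter> B - Y1 \<inter> Y2 then cap w else 0))
    \<le> (\<Sum>w\<in>V. (if w \<in> A - Y1 then cap w else 0) + (if w \<in> B - Y2 then cap w else 0))"
    by (rule sum_mono) (use assms in auto)
  then have "sum cap (A \<union> B - (Y1 \<union> Y2)) + sum cap (A \<inter> B - Y1 \<inter> Y2) \<le> sum cap (A - Y1) + sum cap (B - Y2)"
    using assms by (simp add: as_sum_over_V sum.distrib Diff_subset[THEN subset_trans] le_infI1)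
  then show ?thesis
    using touched_rate_submodular[of F rate paths Y1 Y2] assms(6) unfolding cut_value_def by simp
qed

definition allocations ::
  "'f set \<Rightarrow> ('f \<Rightarrow> real) \<Rightarrow> ('f \<Rightarrow> 'v set) \<Rightarrow> ('v \<Rightarrow> real) \<Rightarrow> 'v set \<Rightarrow> ('f \<Rightarrow> 'v \<Rightarrow> real) set"
  where "allocations F rate paths cap U =
    {x. (\<forall>f v. 0 \<le> x f v) \<and> (\<forall>f v. x f v \<noteq> 0 \<longrightarrow> f \<in> F \<and> v \<in> paths f \<and> v \<in> U) \<and>
        (\<forall>v\<in>U. (\<Sum>f\<in>F. x f v) \<le> cap v) \<and> (\<forall>f\<in>F. (\<Sum>v\<in>U. x f v) \<le> rate f)}"

definition alloc_total :: "'f set \<Rightarrow> 'v set \<Rightarrow> ('f \<Rightarrow> 'v \<Rightarrow> real) \<Rightarrow> real"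
  where "alloc_total F U x = (\<Sum>f\<in>F. \<Sum>v\<in>U. x f v)"

lemma compact_PiE_UNIV:
  assumes "\<And>i. compact (S i)"
  shows "compact (Pi\<^sub>E UNIV S)"
proof -
  have "compactin (product_topology (\<lambda>_. euclidean) UNIV) (Pi\<^sub>E UNIV S)"
    using assms by (simp add: compactin_PiE)
  then show ?thesis by (simp add: euclidean_product_topology)
qed

lemma continuous_on_entry: "continuous_on S (\<lambda>x :: 'a \<Rightarrow> 'b \<Rightarrow> real. x i j)"
  by (rule continuous_on_subset[OF continuous_on_product_then_coordinatewise[OF
        continuous_on_product_coordinates] subset_UNIV])

lemma closed_allocations: "closed (allocations F rate paths cap U)"
proof -
  have "allocations F rate paths cap U =
    {x. \<forall>f v. 0 \<le> x f v} \<inter> {x. \<forall>f v. \<not> (f \<in> F \<and> v \<in> paths f \<and> v \<in> U) \<longrightarrow> x f v = 0} \<inter>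
    {x. \<forall>v. v \<in> U \<longrightarrow> (\<Sum>f\<in>F. x f v) \<le> cap v} \<inter> {x. \<forall>f. f \<in> F \<longrightarrow> (\<Sum>v\<in>U. x f v) \<le> rate f}"
    unfolding allocations_def by blast
  also have "closed \<dots>"
    by (intro closed_Int closed_Collect_all closed_Collect_imp closed_Collect_le closed_Collect_eq
        open_Collect_const continuous_on_sum continuous_on_entry continuous_on_const)
  finally show ?thesis .
qed

text \<open>The absolute value is needed because rate is unconstrained outside F.\<close>

lemma allocations_subset_box:
  assumes "finite U"
  shows "allocations F rate paths cap U \<subseteq> Pi\<^sub>E UNIV (\<lambda>f. Pi\<^sub>E UNIV (\<lambda>_. {0..\<bar>rate f\<bar>}))"
proof
  fix x assume x: "x \<in> allocations F rate paths cap U"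
  have "x f v \<le> \<bar>rate f\<bar>" for f v
  proof (cases "x f v = 0")
    case False
    with x have "f \<in> F" "v \<in> U" unfolding allocations_def by auto
    with x assms have "x f v \<le> (\<Sum>w\<in>U. x f w)" "(\<Sum>w\<in>U. x f w) \<le> rate f"
      unfolding allocations_def by (auto intro: member_le_sum)
    then show ?thesis by linarith
  qed simp
  with x show "x \<in> Pi\<^sub>E UNIV (\<lambda>f. Pi\<^sub>E UNIV (\<lambda>_. {0..\<bar>rate f\<bar>}))"
    unfolding allocations_def by (simp add: PiE_UNIV_domain)
qed

lemma compact_allocations:
  assumes "finite U"
  shows "compact (allocations F rate paths cap U)"
proof -
  have "compact (Pi\<^sub>E UNIV (\<lambda>f. Pi\<^sub>E UNIV (\<lambda>_. {0..\<bar>rate f\<bar>})) \<inter> allocations F rate paths cap U)"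
    by (intro compact_Int_closed compact_PiE_UNIV compact_Icc closed_allocations)
  then show ?thesis
    by (simp add: Int_absorb1[OF allocations_subset_box[OF assms]])
qed

lemma ex_maximal_allocation:
  assumes "finite F" "finite U" "\<And>f. f \<in> F \<Longrightarrow> 0 \<le> rate f" "\<And>v. v \<in> U \<Longrightarrow> 0 \<le> cap v"
  obtains x where "x \<in> allocations F rate paths cap U"
    and "\<And>y. y \<in> allocations F rate paths cap U \<Longrightarrow> alloc_total F U y \<le> alloc_total F U x"
proof -
  have "(\<lambda>_ _. 0) \<in> allocations F rate paths cap U"
    using assms(3,4) unfolding allocations_def by simp
  moreover have "continuous_on (allocations F rate paths cap U) (alloc_total F U)"
    unfolding alloc_total_def by (intro continuous_on_sum continuous_on_entry)
  ultimately show ?thesis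
    using continuous_attains_sup[OF compact_allocations[OF assms(2)]] that by blast
qed

lemma allocation_feasible3:
  assumes "U \<subseteq> V" "x \<in> allocations F rate paths cap U"
  shows "feasible3 V F rate cap U x"
  using assms unfolding allocations_def feasible3_def by auto

lemma objective3_allocation:
  assumes "finite U" "x \<in> allocations F rate paths cap U"
  shows "objective3 F paths U x = alloc_total F U x"
  unfolding objective3_def alloc_total_def
proof (rule sum.cong[OF refl])
  fix f
  have "x f v = 0" if "v \<in> U - paths f \<inter> U" for v
    using assms(2) that unfolding allocations_def by auto
  then show "(\<Sum>v\<in>paths f \<inter> U. x f v) = (\<Sum>v\<in>U. x f v)"
    using assms(1) by (intro sum.mono_neutral_left) auto
qed

subsection \<open>Weak duality\<close>

lemma objective3_le_cut_value:
  assumes "finite U" "U \<subseteq> V" "Y \<subseteq> U" and x: "feasible3 V F rate cap U x"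
  shows "objective3 F paths U x \<le> cut_value F rate paths cap U Y"
proof -
  have nonneg: "0 \<le> x f v" if "f \<in> F" "v \<in> U" for f v
    using x assms(2) that unfolding feasible3_def by blast
  have to_Y: "(\<Sum>f\<in>F. \<Sum>v\<in>paths f \<inter> Y. x f v) \<le> touched_rate F rate paths Y"
    unfolding touched_rate_def
  proof (rule sum_mono)
    fix f assume "f \<in> F"
    have "(\<Sum>v\<in>paths f \<inter> Y. x f v) \<le> (\<Sum>v\<in>U. x f v)"
      using assms(1,3) nonneg \<open>f \<in> F\<close> by (intro sum_mono2) auto
    also have "\<dots> \<le> rate f" using x \<open>f \<in> F\<close> unfolding feasible3_def by blast
    finally show "(\<Sum>v\<in>paths f \<inter> Y. x f v) \<le> (if paths f \<inter> Y = {} then 0 else rate f)"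
      by simp
  qed
  have "(\<Sum>f\<in>F. \<Sum>v\<in>paths f \<inter> (U - Y). x f v) \<le> (\<Sum>f\<in>F. \<Sum>v\<in>U - Y. x f v)"
    using assms(1) nonneg by (intro sum_mono sum_mono2) auto
  also have "\<dots> = (\<Sum>v\<in>U - Y. \<Sum>f\<in>F. x f v)" by (rule sum.swap)
  also have "\<dots> \<le> sum cap (U - Y)"
    using x unfolding feasible3_def by (intro sum_mono) auto
  finally have to_rest: "(\<Sum>f\<in>F. \<Sum>v\<in>paths f \<inter> (U - Y). x f v) \<le> sum cap (U - Y)" .
  have "(\<Sum>v\<in>paths f \<inter> U. x f v) = (\<Sum>v\<in>paths f \<inter> (U - Y). x f v) + (\<Sum>v\<in>paths f \<inter> Y. x f v)" for f
  proof -
    have "paths f \<inter> U = paths f \<inter> (U - Y) \<union> paths f \<inter> Y" using assms(3) by blast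
    moreover have "finite (paths f \<inter> (U - Y))" "finite (paths f \<inter> Y)"
      using assms(1) finite_subset[OF assms(3,1)] by simp_all
    moreover have "paths f \<inter> (U - Y) \<inter> (paths f \<inter> Y) = {}" by blast
    ultimately show ?thesis by (simp add: sum.union_disjoint)
  qed
  then have "objective3 F paths U x
      = (\<Sum>f\<in>F. \<Sum>v\<in>paths f \<inter> (U - Y). x f v) + (\<Sum>f\<in>F. \<Sum>v\<in>paths f \<inter> Y. x f v)"
    unfolding objective3_def by (simp add: sum.distrib)
  then show ?thesis unfolding cut_value_def using to_Y to_rest by linarith
qed

lemma R3_le_cut_value:
  assumes "finite V" "U \<subseteq> V" "Y \<subseteq> U"
    and "\<And>f. f \<in> F \<Longrightarrow> 0 \<le> rate f" "\<And>v. v \<in> U \<Longrightarrow> 0 \<le> cap v"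
  shows "R3 V F rate paths cap U \<le> cut_value F rate paths cap U Y"
  unfolding R3_def
proof (rule cSup_least)
  have "objective3 F paths U (\<lambda>_ _. 0) \<in> {objective3 F paths U x |x. feasible3 V F rate cap U x}"
    using assms(4,5) unfolding feasible3_def by auto
  then show "{objective3 F paths U x |x. feasible3 V F rate cap U x} \<noteq> {}" by auto
next
  fix z assume "z \<in> {objective3 F paths U x |x. feasible3 V F rate cap U x}"
  then obtain x where "z = objective3 F paths U x" "feasible3 V F rate cap U x" by auto
  then show "z \<le> cut_value F rate paths cap U Y"
    using objective3_le_cut_value[OF finite_subset[OF assms(2,1)] assms(2,3)] by simp
qed

lemma objective3_le_R3:
  assumes "finite V" "U \<subseteq> V" "feasible3 V F rate cap U x"
  shows "objective3 F paths U x \<le> R3 V F rate paths cap U"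
  unfolding R3_def
proof (rule cSup_upper)
  show "objective3 F paths U x \<in> {objective3 F paths U x |x. feasible3 V F rate cap U x}"
    using assms(3) by blast
  show "bdd_above {objective3 F paths U x |x. feasible3 V F rate cap U x}"
  proof (rule bdd_aboveI)
    fix z assume "z \<in> {objective3 F paths U x |x. feasible3 V F rate cap U x}"
    then obtain y where "z = objective3 F paths U y" "feasible3 V F rate cap U y" by blast
    then show "z \<le> cut_value F rate paths cap U {}"
      using objective3_le_cut_value[OF finite_subset[OF assms(2,1)] assms(2) empty_subsetI] by simp
  qed
qed

subsection \<open>Augmenting paths\<close>

locale maximal_allocation =
  fixes F :: "'f set" and rate :: "'f \<Rightarrow> real" and paths :: "'f \<Rightarrow> 'v set"
    and cap :: "'v \<Rightarrow> real" and U :: "'v set" and x :: "'f \<Rightarrow> 'v \<Rightarrow> real"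
  assumes finite_F: "finite F" and finite_U: "finite U"
    and allocation: "x \<in> allocations F rate paths cap U"
    and maximal: "\<And>y. y \<in> allocations F rate paths cap U \<Longrightarrow> alloc_total F U y \<le> alloc_total F U x"
begin

lemma nonneg: "0 \<le> x f v"
  using allocation unfolding allocations_def by blast

lemma support: "x f v \<noteq> 0 \<Longrightarrow> f \<in> F \<and> v \<in> paths f \<and> v \<in> U"
  using allocation unfolding allocations_def by blast

lemma load_le_cap: "v \<in> U \<Longrightarrow> (\<Sum>f\<in>F. x f v) \<le> cap v"
  using allocation unfolding allocations_def by blast

lemma sent_le_rate: "f \<in> F \<Longrightarrow> (\<Sum>v\<in>U. x f v) \<le> rate f"
  using allocation unfolding allocations_def by blast

lemma rate_nonneg: "f \<in> F \<Longrightarrow> 0 \<le> rate f"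
  using sent_le_rate sum_nonneg[of U "x f"] nonneg by fastforce

text \<open>Flows reachable in the residual graph from the source: a flow with spare rate may send
  more to any node u of its path, and a flow g already using u may then withdraw from u.\<close>

inductive reachable :: "'f \<Rightarrow> bool" where
  spare: "f \<in> F \<Longrightarrow> (\<Sum>v\<in>U. x f v) < rate f \<Longrightarrow> reachable f"
| reroute: "reachable f \<Longrightarrow> u \<in> paths f \<Longrightarrow> u \<in> U \<Longrightarrow> 0 < x g u \<Longrightarrow> reachable g"

lemma reachable_in_F: "reachable f \<Longrightarrow> f \<in> F"
  by (induction rule: reachable.induct) (auto dest: support[OF less_imp_neq[symmetric]])

text \<open>An augmenting path is encoded by the signed matrix D of its edges (+1 on forward, -1 on
  backward edges); dload and drate record the resulting change of node loads and flow totals.\<close>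

definition admissible_change :: "('f \<Rightarrow> 'v \<Rightarrow> real) \<Rightarrow> ('v \<Rightarrow> real) \<Rightarrow> ('f \<Rightarrow> real) \<Rightarrow> bool"
  where "admissible_change D dload drate \<longleftrightarrow>
    (\<forall>h w. D h w \<noteq> 0 \<longrightarrow> h \<in> F \<and> w \<in> paths h \<and> w \<in> U) \<and> (\<forall>h w. D h w < 0 \<longrightarrow> 0 < x h w) \<and>
    (\<forall>w\<in>U. (\<Sum>h\<in>F. D h w) = dload w) \<and> (\<forall>h\<in>F. (\<Sum>w\<in>U. D h w) = drate h)"

lemma admissible_change_zero: "admissible_change (\<lambda>_ _. 0) (\<lambda>_. 0) (\<lambda>_. 0)"
  unfolding admissible_change_def by simp

lemma admissible_change_add_edge:
  assumes "admissible_change D dload drate" "f \<in> F" "u \<in> paths f" "u \<in> U"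
  shows "admissible_change (\<lambda>h w. D h w + (if h = f \<and> w = u then 1 else 0))
    (\<lambda>w. dload w + (if w = u then 1 else 0)) (\<lambda>h. drate h + (if h = f then 1 else 0))"
  using assms finite_F finite_U
  unfolding admissible_change_def by (auto simp: sum.distrib split: if_splits)

lemma admissible_change_remove_edge:
  assumes "admissible_change D dload drate" "0 < x g u"
  shows "admissible_change (\<lambda>h w. D h w - (if h = g \<and> w = u then 1 else 0))
    (\<lambda>w. dload w - (if w = u then 1 else 0)) (\<lambda>h. drate h - (if h = g then 1 else 0))"
  using assms support[of g u] finite_F finite_U
  unfolding admissible_change_def by (auto simp: sum_subtractf split: if_splits)

lemma reachable_admissible_change:
  assumes "reachable g"
  shows "\<exists>f0 D. f0 \<in> F \<and> (\<Sum>v\<in>U. x f0 v) < rate f0 \<and>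
    admissible_change D (\<lambda>_. 0) (\<lambda>h. (if h = f0 then 1 else 0) - (if h = g then 1 else 0))"
  using assms
proof induction
  case (spare f)
  then show ?case using admissible_change_zero by (intro exI[of _ f] exI[of _ "\<lambda>_ _. 0"]) simp
next
  case (reroute f u g)
  then obtain f0 D where "f0 \<in> F" "(\<Sum>v\<in>U. x f0 v) < rate f0"
    and D: "admissible_change D (\<lambda>_. 0) (\<lambda>h. (if h = f0 then 1 else 0) - (if h = f then 1 else 0))"
    by blast
  have "f \<in> F" using reachable_in_F[OF reroute(1)] .
  from admissible_change_remove_edge[OF admissible_change_add_edge[OF D \<open>f \<in> F\<close> reroute(2,3)] reroute(4)]
  show ?case using \<open>f0 \<in> F\<close> \<open>(\<Sum>v\<in>U. x f0 v) < rate f0\<close> by auto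
qed

lemma admissible_change_step:
  assumes D: "admissible_change D dload drate" and "0 \<le> \<epsilon>"
    and neg: "\<And>h w. D h w < 0 \<Longrightarrow> \<epsilon> * - D h w \<le> x h w"
    and load: "\<And>w. w \<in> U \<Longrightarrow> (\<Sum>h\<in>F. x h w) + \<epsilon> * dload w \<le> cap w"
    and sent: "\<And>h. h \<in> F \<Longrightarrow> (\<Sum>w\<in>U. x h w) + \<epsilon> * drate h \<le> rate h"
  shows "(\<lambda>h w. x h w + \<epsilon> * D h w) \<in> allocations F rate paths cap U"
    and "alloc_total F U (\<lambda>h w. x h w + \<epsilon> * D h w) = alloc_total F U x + \<epsilon> * sum drate F"
proof -
  have "0 \<le> x h w + \<epsilon> * D h w" for h w
    using neg[of h w] nonneg[of h w] \<open>0 \<le> \<epsilon>\<close> by (cases "D h w < 0") auto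
  moreover have "x h w + \<epsilon> * D h w \<noteq> 0 \<Longrightarrow> h \<in> F \<and> w \<in> paths h \<and> w \<in> U" for h w
    using D support[of h w] unfolding admissible_change_def by (cases "D h w = 0") auto
  moreover have "(\<Sum>h\<in>F. x h w + \<epsilon> * D h w) \<le> cap w" if "w \<in> U" for w
    using D load[OF that] that
    unfolding admissible_change_def by (simp add: sum.distrib sum_distrib_left[symmetric])
  moreover have "(\<Sum>w\<in>U. x h w + \<epsilon> * D h w) \<le> rate h" if "h \<in> F" for h
    using D sent[OF that] that
    unfolding admissible_change_def by (simp add: sum.distrib sum_distrib_left[symmetric])
  ultimately show "(\<lambda>h w. x h w + \<epsilon> * D h w) \<in> allocations F rate paths cap U"
    unfolding allocations_def by blast
  show "alloc_total F U (\<lambda>h w. x h w + \<epsilon> * D h w) = alloc_total F U x + \<epsilon> * sum drate F"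
    using D unfolding alloc_total_def admissible_change_def
    by (simp add: sum.distrib sum_distrib_left[symmetric])
qed

lemma no_augmenting_change:
  assumes D: "admissible_change D (\<lambda>w. if w = u then 1 else 0) (\<lambda>h. if h = f0 then 1 else 0)"
    and "u \<in> U" "(\<Sum>h\<in>F. x h u) < cap u" and "f0 \<in> F" "(\<Sum>w\<in>U. x f0 w) < rate f0"
  shows False
proof -
  define N where "N = {(h, w) \<in> F \<times> U. D h w < 0}"
  define E where "E = insert (cap u - (\<Sum>h\<in>F. x h u)) (insert (rate f0 - (\<Sum>w\<in>U. x f0 w))
    ((\<lambda>(h, w). x h w / - D h w) ` N))"
  define \<epsilon> where "\<epsilon> = Min E"
  have "N \<subseteq> F \<times> U" unfolding N_def by auto
  then have "finite E"
    unfolding E_def using finite_subset[OF _ finite_cartesian_product[OF finite_F finite_U]] by simp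
  moreover have "0 < e" if "e \<in> E" for e
    using that assms(3,5) D unfolding E_def N_def admissible_change_def by (auto simp: divide_pos_neg)
  moreover have "E \<noteq> {}" unfolding E_def by simp
  ultimately have "0 < \<epsilon>" unfolding \<epsilon>_def by (simp add: Min_gr_iff)
  have \<epsilon>_le: "\<epsilon> \<le> e" if "e \<in> E" for e
    unfolding \<epsilon>_def using \<open>finite E\<close> that by simp
  have neg: "\<epsilon> * - D h w \<le> x h w" if "D h w < 0" for h w
  proof -
    have "h \<in> F" "w \<in> U" using D less_imp_neq[OF that] unfolding admissible_change_def by blast+
    then have "(h, w) \<in> N" unfolding N_def using that by simp
    then have "\<epsilon> \<le> x h w / - D h w" using \<epsilon>_le unfolding E_def by auto
    then have "\<epsilon> * - D h w \<le> x h w / - D h w * - D h w"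
      using that by (intro mult_right_mono) auto
    then show ?thesis using that by simp
  qed
  have load: "(\<Sum>h\<in>F. x h w) + \<epsilon> * (if w = u then 1 else 0) \<le> cap w" if "w \<in> U" for w
    using load_le_cap[OF that] \<epsilon>_le[of "cap u - (\<Sum>h\<in>F. x h u)"] unfolding E_def by auto
  have sent: "(\<Sum>w\<in>U. x h w) + \<epsilon> * (if h = f0 then 1 else 0) \<le> rate h" if "h \<in> F" for h
    using sent_le_rate[OF that] \<epsilon>_le[of "rate f0 - (\<Sum>w\<in>U. x f0 w)"] unfolding E_def by auto
  note step = admissible_change_step[OF D less_imp_le[OF \<open>0 < \<epsilon>\<close>] neg load sent]
  have "(\<Sum>h\<in>F. if h = f0 then 1 else 0) = (1::real)" using \<open>f0 \<in> F\<close> finite_F by simp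
  then have "alloc_total F U x + \<epsilon> \<le> alloc_total F U x"
    using maximal[OF step(1)] step(2) by simp
  then show False using \<open>0 < \<epsilon>\<close> by simp
qed

lemma reachable_saturates:
  assumes "reachable f" "u \<in> paths f" "u \<in> U"
  shows "(\<Sum>g\<in>F. x g u) = cap u"
proof (rule ccontr)
  assume "(\<Sum>g\<in>F. x g u) \<noteq> cap u"
  then have "(\<Sum>g\<in>F. x g u) < cap u" using load_le_cap[OF assms(3)] by simp
  obtain f0 D where "f0 \<in> F" "(\<Sum>v\<in>U. x f0 v) < rate f0"
    and D: "admissible_change D (\<lambda>_. 0) (\<lambda>h. (if h = f0 then 1 else 0) - (if h = f then 1 else 0))"
    using reachable_admissible_change[OF assms(1)] by blast
  have "admissible_change (\<lambda>h w. D h w + (if h = f \<and> w = u then 1 else 0))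
    (\<lambda>w. if w = u then 1 else 0) (\<lambda>h. if h = f0 then 1 else 0)"
    using admissible_change_add_edge[OF D reachable_in_F[OF assms(1)] assms(2,3)] by simp
  then show False
    using no_augmenting_change \<open>(\<Sum>g\<in>F. x g u) < cap u\<close> \<open>f0 \<in> F\<close> \<open>(\<Sum>v\<in>U. x f0 v) < rate f0\<close>
      assms(3) by blast
qed

definition reached_nodes :: "'v set"
  where "reached_nodes = {u \<in> U. \<exists>f. reachable f \<and> u \<in> paths f}"

lemma sent_outside_reached_nodes:
  assumes "f \<in> F"
  shows "(\<Sum>w\<in>U - reached_nodes. x f w) = (if reachable f then 0 else rate f)"
proof (cases "reachable f")
  case True
  have "x f w = 0" if "w \<in> U - reached_nodes" for w
    using support[of f w] True that unfolding reached_nodes_def by blast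
  then show ?thesis using True by simp
next
  case False
  have "x f w = 0" if w: "w \<in> reached_nodes" for w
  proof (rule ccontr)
    assume "x f w \<noteq> 0"
    then have "0 < x f w" using nonneg[of f w] by simp
    moreover obtain g where "reachable g" "w \<in> paths g" "w \<in> U"
      using w unfolding reached_nodes_def by blast
    ultimately show False using reroute False by blast
  qed
  then have "(\<Sum>w\<in>reached_nodes. x f w) = 0" by simp
  moreover have "(\<Sum>w\<in>U. x f w) = rate f"
    using spare[OF assms] False sent_le_rate[OF assms] by fastforce
  moreover have "(\<Sum>w\<in>U. x f w) = (\<Sum>w\<in>U - reached_nodes. x f w) + (\<Sum>w\<in>reached_nodes. x f w)"
    by (rule sum.subset_diff) (auto simp: reached_nodes_def finite_U)
  ultimately show ?thesis using False by simp
qed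

lemma cut_value_reached_nodes: "cut_value F rate paths cap U (U - reached_nodes) \<le> alloc_total F U x"
proof -
  have "reached_nodes \<subseteq> U" unfolding reached_nodes_def by blast
  then have "U - (U - reached_nodes) = reached_nodes" by blast
  have "alloc_total F U x = (\<Sum>w\<in>U. \<Sum>f\<in>F. x f w)"
    unfolding alloc_total_def by (rule sum.swap)
  also have "\<dots> = (\<Sum>w\<in>U - reached_nodes. \<Sum>f\<in>F. x f w) + (\<Sum>w\<in>reached_nodes. \<Sum>f\<in>F. x f w)"
    using \<open>reached_nodes \<subseteq> U\<close> finite_U by (rule sum.subset_diff)
  also have "(\<Sum>w\<in>reached_nodes. \<Sum>f\<in>F. x f w) = sum cap reached_nodes"
    using reachable_saturates unfolding reached_nodes_def by (intro sum.cong) auto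
  also have "(\<Sum>w\<in>U - reached_nodes. \<Sum>f\<in>F. x f w) = (\<Sum>f\<in>F. if reachable f then 0 else rate f)"
    by (subst sum.swap) (simp add: sent_outside_reached_nodes)
  also have "touched_rate F rate paths (U - reached_nodes) \<le> \<dots>"
    unfolding touched_rate_def
  proof (rule sum_mono)
    fix f assume "f \<in> F"
    have "\<not> reachable f" if "paths f \<inter> (U - reached_nodes) \<noteq> {}"
      using that unfolding reached_nodes_def by blast
    then show "(if paths f \<inter> (U - reached_nodes) = {} then 0 else rate f) \<le> (if reachable f then 0 else rate f)"
      using rate_nonneg[OF \<open>f \<in> F\<close>] by auto
  qed
  ultimately show ?thesis
    unfolding cut_value_def \<open>U - (U - reached_nodes) = reached_nodes\<close> by linarith
qed

end

subsection \<open>Max-flow min-cut\<close>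

lemma ex_cut_value_le_R3:
  assumes "finite V" "finite F" "U \<subseteq> V"
    and "\<And>f. f \<in> F \<Longrightarrow> 0 \<le> rate f" "\<And>v. v \<in> U \<Longrightarrow> 0 \<le> cap v"
  shows "\<exists>Y\<subseteq>U. cut_value F rate paths cap U Y \<le> R3 V F rate paths cap U"
proof -
  have "finite U" using finite_subset[OF assms(3,1)] .
  obtain x where x: "x \<in> allocations F rate paths cap U"
    and "\<And>y. y \<in> allocations F rate paths cap U \<Longrightarrow> alloc_total F U y \<le> alloc_total F U x"
    using ex_maximal_allocation[where rate = rate and cap = cap, OF assms(2) \<open>finite U\<close> assms(4,5)] by blast
  then interpret maximal_allocation F rate paths cap U x
    using assms(2) \<open>finite U\<close> by unfold_locales
  have "cut_value F rate paths cap U (U - reached_nodes) \<le> alloc_total F U x"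
    by (rule cut_value_reached_nodes)
  also have "\<dots> = objective3 F paths U x"
    using objective3_allocation[OF \<open>finite U\<close> x] by simp
  also have "\<dots> \<le> R3 V F rate paths cap U"
    using objective3_le_R3[OF assms(1,3) allocation_feasible3[OF assms(3) x]] .
  finally show ?thesis by blast
qed

lemma R3_eq_min_cut:
  assumes "finite V" "finite F" "U \<subseteq> V"
    and "\<And>f. f \<in> F \<Longrightarrow> 0 \<le> rate f" "\<And>v. v \<in> U \<Longrightarrow> 0 \<le> cap v"
  shows "R3 V F rate paths cap U = (MIN Y\<in>Pow U. cut_value F rate paths cap U Y)"
proof (rule antisym)
  have "finite (Pow U)" using finite_subset[OF assms(3,1)] by simp
  then show "R3 V F rate paths cap U \<le> (MIN Y\<in>Pow U. cut_value F rate paths cap U Y)"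
    using R3_le_cut_value[where rate = rate and cap = cap, OF assms(1,3) _ assms(4,5)] by (intro Min.boundedI) auto
  obtain Y where "Y \<subseteq> U" "cut_value F rate paths cap U Y \<le> R3 V F rate paths cap U"
    using ex_cut_value_le_R3[where rate = rate and cap = cap, OF assms] by blast
  moreover have "(MIN Y\<in>Pow U. cut_value F rate paths cap U Y) \<le> cut_value F rate paths cap U Y"
    using \<open>finite (Pow U)\<close> \<open>Y \<subseteq> U\<close> by (intro Min_le) auto
  ultimately show "(MIN Y\<in>Pow U. cut_value F rate paths cap U Y) \<le> R3 V F rate paths cap U"
    by linarith
qed

theorem lemma2:
  fixes V :: "'v set" and F :: "'f set"
    and rate :: "'f \<Rightarrow> real" and path :: "'f \<Rightarrow> 'v set" and cap :: "'v \<Rightarrow> real"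
  assumes "finite V" and "finite F"
    and "\<And>f. f \<in> F \<Longrightarrow> rate f > 0"
    and "\<And>f. f \<in> F \<Longrightarrow> path f \<subseteq> V"
    and "\<And>v. v \<in> V \<Longrightarrow> cap v > 0"
  shows "monotone_nondecr_on V (R3 V F rate path cap) \<and> submodular_on V (R3 V F rate path cap)"
proof -
  have rate: "\<And>f. f \<in> F \<Longrightarrow> 0 \<le> rate f" and cap: "\<And>v. v \<in> V \<Longrightarrow> 0 \<le> cap v"
    using assms(3,5) by (auto simp: less_imp_le)
  have min_cut: "R3 V F rate path cap A = (MIN Y\<in>Pow A. cut_value F rate path cap A Y)" if "A \<subseteq> V" for A
    using that cap by (intro R3_eq_min_cut[where rate = rate and cap = cap, OF assms(1,2) that rate]) auto
  have "monotone_nondecr_on V (R3 V F rate path cap)"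
  proof (rule monotone_nondecr_on_partial_min[OF assms(1) min_cut])
    fix A B Y assume "A \<subseteq> B" "B \<subseteq> V" "Y \<subseteq> B"
    then show "cut_value F rate path cap A (Y \<inter> A) \<le> cut_value F rate path cap B Y"
      by (rule cut_value_mono[where rate = rate and cap = cap, OF assms(1) _ _ _ rate cap])
  qed
  moreover have "submodular_on V (R3 V F rate path cap)"
  proof (rule submodular_on_partial_min[OF assms(1) min_cut])
    fix A B Y1 Y2 assume "A \<subseteq> V" "B \<subseteq> V" "Y1 \<subseteq> A" "Y2 \<subseteq> B"
    then show "cut_value F rate path cap (A \<union> B) (Y1 \<union> Y2) + cut_value F rate path cap (A \<inter> B) (Y1 \<inter> Y2)
        \<le> cut_value F rate path cap A Y1 + cut_value F rate path cap B Y2"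
      by (rule cut_value_lattice[where rate = rate and cap = cap, OF assms(1) _ _ _ _ rate cap])
  qed
  ultimately show ?thesis ..
qed

end
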